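(* Fix $L\in\mathbb R$. There are $c>0$ and $C\in\mathbb R$ such that for all $n$ large enough $$|Q^{(n)}_L(x,\xi)|\le Ce^{-c(x+\xi)}$$ for all $x\ge0$ and $\xi\in\mathbb R$.
   Context: $q_s^{(n)}(y)=\frac1{2\pi i}\oint_{\Gamma_0}\frac{dw}{w}w^y(1-w)^{n-s}(1+1/w)^s$, $\Gamma_0$ a small counterclockwise circle around $0$. $b_n(\tau)=n(1+1/\sqrt2)+2^{-1/6}\tau n^{2/3}$. Scaling (integer parts neglected): $i=2^{-5/6}xn^{1/3}$, $u=n/\sqrt2+2^{-5/6}\xi n^{1/3}$. $Q^{(n)}_L(x,\xi)=2^{-5/6}n^{1/3}2^{-n/2}(\sqrt2+1)^{i+2^{-5/6}\xi n^{1/3}-2^{-1/6}Ln^{2/3}}q^{(n)}_{b_n(L)/2}(u+i)$. *)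

theory Defs
  imports "HOL-Complex_Analysis.Complex_Analysis"
begin

text \<open>The radius 1/2 is "small": the integrand
  is holomorphic on the punctured disc of radius 1 (the only other possible pole is w = 1).\<close>
definition q :: "nat \<Rightarrow> int \<Rightarrow> int \<Rightarrow> complex" where
  "q n s y = contour_integral (circlepath 0 (1/2))
      (\<lambda>w. w powi y * (1 - w) powi (int n - s) * (1 + 1 / w) powi s / w) / (2 * pi * \<i>)"

definition b :: "nat \<Rightarrow> real \<Rightarrow> real" where
  "b n \<tau> = real n * (1 + 1 / sqrt 2) + 2 powr (-1/6) * \<tau> * real n powr (2/3)"

definition iidx :: "nat \<Rightarrow> real \<Rightarrow> int" where
  "iidx n x = \<lfloor>2 powr (-5/6) * x * real n powr (1/3)\<rfloor>"

definition uidx :: "nat \<Rightarrow> real \<Rightarrow> int" where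
  "uidx n \<xi> = \<lfloor>real n / sqrt 2 + 2 powr (-5/6) * \<xi> * real n powr (1/3)\<rfloor>"

definition Q :: "nat \<Rightarrow> real \<Rightarrow> real \<Rightarrow> real \<Rightarrow> complex" where
  "Q n L x \<xi> = complex_of_real
      (2 powr (-5/6) * real n powr (1/3) * 2 powr (- real n / 2) *
       (sqrt 2 + 1) powr (real_of_int (iidx n x) + 2 powr (-5/6) * \<xi> * real n powr (1/3)
                           - 2 powr (-1/6) * L * real n powr (2/3)))
     * q n \<lfloor>b n L / 2\<rfloor> (uidx n \<xi> + iidx n x)"

end

theory Submission
  imports Defs "HOL-Real_Asymp.Real_Asymp"
begin

(* 2 pi i q_s(y) is the contour integral of w^(y-s-1) (1-w)^(n-s) (1+w)^s over any circle
   |w| = r < 1. On that circle the modulus of the integrand is at most its value at w = r times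
   the Gaussian factor exp (-K (1 - cos theta)), and K >= r n^(2/3) as soon as
   s (1-r)^2 - (n-s) (1+r)^2 >= n^(2/3); the theta-integral is then O(n^(-1/3)) and absorbs the
   factor n^(1/3) in Q.

   For every s the weight rho^(n/sqrt 2 - s) (1-rho)^(n-s) (1+rho)^s is critical at
   rho = sqrt 2 - 1, where the normalisation 2^(-n/2) (sqrt 2 + 1)^(...) in Q makes it O(1).
   We use the slightly smaller radius r = (sqrt 2 - 1) exp (-h), h = kappa n^(-1/3),
   kappa = 20 (|L| + 1). Since s = floor (b_n(L)/2) is (2 + sqrt 2) n/4 up to O(n^(2/3)), a second
   order mean value estimate shows that leaving the critical point costs only
   exp (O(h^2 (n h + |s - (2 + sqrt 2) n/4|))) = exp (O(kappa^3)), while r^y gains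
   exp (-h (y - n/sqrt 2)) = exp (-2^(-5/6) kappa (x + xi) + O(1)). The same shift h makes the
   Gaussian coefficient K of order n^(2/3). *)

section \<open>A Gaussian integral over the circle\<close>

lemma sin_ge_third:
  fixes x :: real
  assumes "0 \<le> x" "x \<le> pi / 2"
  shows "x / 3 \<le> sin x"
proof -
  have "\<bar>sin x - (\<Sum>m<4. sin_coeff m * x ^ m)\<bar> \<le> inverse (fact 4) * \<bar>x\<bar> ^ 4"
    by (rule Maclaurin_sin_bound)
  moreover have "(\<Sum>m<4. sin_coeff m * x ^ m) = x - x ^ 3 / 6"
    by (simp add: lessThan_nat_numeral sin_coeff_def fact_numeral)
  ultimately have "\<bar>sin x - (x - x ^ 3 / 6)\<bar> \<le> x ^ 4 / 24"
    using assms by (simp add: fact_numeral)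
  then have taylor: "x - x ^ 3 / 6 - x ^ 4 / 24 \<le> sin x"
    unfolding abs_le_iff by linarith
  have "pi \<le> 16 / 5"
    using pi_approx by simp
  then have "x \<le> 8 / 5"
    using assms by linarith
  then have sq: "x * x \<le> 8 / 5 * x"
    using assms by (intro mult_right_mono) auto
  have cube: "x ^ 3 \<le> 64 / 25 * x"
  proof -
    have "x ^ 3 = x * x * x"
      by (simp add: power3_eq_cube)
    also have "\<dots> \<le> 8 / 5 * x * x"
      using mult_right_mono[OF sq assms(1)] by simp
    also have "\<dots> \<le> 64 / 25 * x"
      using sq by simp
    finally show ?thesis .
  qed
  have "x ^ 4 = x ^ 3 * x"
    by (simp add: power_numeral_reduce)
  also have "\<dots> \<le> 64 / 25 * (x * x)"
    using mult_right_mono[OF cube assms(1)] by simp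
  also have "\<dots> \<le> 512 / 125 * x"
    using sq by simp
  finally have "x ^ 4 \<le> 512 / 125 * x" .
  with taylor cube assms show ?thesis
    by linarith
qed

lemma min_le_sin_pi:
  fixes t :: real
  assumes "0 \<le> t" "t \<le> 1"
  shows "min t (1 - t) \<le> sin (pi * t)"
proof -
  have half: "u \<le> sin (pi * u)" if "0 \<le> u" "u \<le> 1 / 2" for u :: real
  proof -
    have "pi * u / 3 \<le> sin (pi * u)"
      using that by (intro sin_ge_third) auto
    moreover have "u \<le> pi * u / 3"
      using that pi_gt3 mult_right_mono[of 3 pi u] by (simp add: mult.commute)
    ultimately show ?thesis
      by linarith
  qed
  have "sin (pi * (1 - t)) = sin (pi * t)"
    by (simp add: right_diff_distrib sin_diff)
  then show ?thesis
    using assms half[of t] half[of "1 - t"] by (cases "t \<le> 1 / 2") (auto simp: min_def)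
qed

lemma exp_cos_le_inverse_quadratic:
  fixes K t :: real
  assumes "0 \<le> K" "0 \<le> t" "t \<le> 1"
  shows "exp (- K * (1 - cos (2 * pi * t))) \<le> 1 / (1 + 2 * K * (min t (1 - t))\<^sup>2)"
proof -
  define \<mu> where "\<mu> = min t (1 - t)"
  have "0 \<le> \<mu>" "\<mu> \<le> sin (pi * t)"
    using assms min_le_sin_pi by (auto simp: \<mu>_def)
  then have "2 * \<mu>\<^sup>2 \<le> 1 - cos (2 * pi * t)"
    using cos_double_sin[of "pi * t"] power_mono[of \<mu> "sin (pi * t)" 2] by (simp add: mult.assoc)
  from mult_left_mono[OF this assms(1)]
  have "exp (- K * (1 - cos (2 * pi * t))) \<le> exp (- (2 * K * \<mu>\<^sup>2))"
    by (simp add: mult_ac)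
  also have "\<dots> = 1 / exp (2 * K * \<mu>\<^sup>2)"
    by (simp add: exp_minus field_simps)
  also have "\<dots> \<le> 1 / (1 + 2 * K * \<mu>\<^sup>2)"
    using assms exp_ge_add_one_self[of "2 * K * \<mu>\<^sup>2"] add_pos_nonneg[of 1 "2 * K * \<mu>\<^sup>2"]
    by (intro divide_left_mono) auto
  finally show ?thesis
    by (simp add: \<mu>_def)
qed

lemma integral_exp_cos_le:
  fixes K :: real
  assumes "K > 0"
  shows "integral {0..1} (\<lambda>t. exp (- K * (1 - cos (2 * pi * t)))) \<le> 4 / sqrt K"
proof -
  define a where "a = 2 * K"
  have a: "a > 0"
    using assms by (simp add: a_def)
  define g where "g t = 1 / (1 + a * t\<^sup>2) + 1 / (1 + a * (1 - t)\<^sup>2)" for t :: real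
  define G where "G t = (arctan (sqrt a * t) - arctan (sqrt a * (1 - t))) / sqrt a" for t :: real
  have "(G has_real_derivative g t) (at t)" for t
    unfolding G_def g_def
    apply (rule derivative_eq_intros refl)+
    using a by (simp_all add: power_mult_distrib) (simp add: field_simps)
  then have g_integral: "(g has_integral (G 1 - G 0)) {0..1}"
    by (intro fundamental_theorem_of_calculus)
       (auto simp: has_real_derivative_iff_has_vector_derivative has_vector_derivative_at_within)
  have "exp (- K * (1 - cos (2 * pi * t))) \<le> g t" if "t \<in> {0..1}" for t
  proof -
    have "exp (- K * (1 - cos (2 * pi * t))) \<le> 1 / (1 + a * (min t (1 - t))\<^sup>2)"
      using exp_cos_le_inverse_quadratic[of K t] that assms by (simp add: a_def)
    also have "\<dots> \<le> g t"
      using a by (auto simp: g_def min_def)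
    finally show ?thesis .
  qed
  moreover have "(\<lambda>t. exp (- K * (1 - cos (2 * pi * t)))) integrable_on {0..1}"
    by (intro integrable_continuous_real continuous_intros)
  ultimately have "integral {0..1} (\<lambda>t. exp (- K * (1 - cos (2 * pi * t)))) \<le> G 1 - G 0"
    by (intro has_integral_le[OF integrable_integral g_integral]) auto
  also have "\<dots> = 2 * arctan (sqrt a) / sqrt a"
    by (simp add: G_def field_simps)
  also have "\<dots> \<le> pi / sqrt a"
    using arctan_ubound[of "sqrt a"] a by (intro divide_right_mono) auto
  also have "\<dots> \<le> 4 / sqrt K"
    using assms pi_less_4 by (intro frac_le) (auto simp: a_def)
  finally show ?thesis .
qed

section \<open>Bounding q on a circle of radius r\<close>

lemma q_eq_contour_integral_circlepath:
  fixes n :: nat and s y :: int and r :: real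
  assumes "0 \<le> s" "s \<le> int n" "0 < r" "r < 1"
  shows "q n s y = contour_integral (circlepath 0 r)
      (\<lambda>w. w powi (y - s - 1) * (1 - w) ^ nat (int n - s) * (1 + w) ^ nat s) / (2 * pi * \<i>)"
proof -
  obtain k m :: nat where k: "s = int k" and m: "int n - s = int m"
    using assms(1,2) by (metis diff_ge_0_iff_ge nonneg_int_cases)
  define F where "F = (\<lambda>w :: complex. w powi (y - s - 1) * (1 - w) ^ nat (int n - s) * (1 + w) ^ nat s)"
  have integrand_eq: "w powi y * (1 - w) powi (int n - s) * (1 + 1 / w) powi s / w = F w"
    if "w \<noteq> 0" for w
  proof -
    have "(1 + 1 / w) powi s = (1 + w) ^ k / w ^ k"
      using that by (simp add: k field_simps power_divide)
    moreover have "w powi (y - s - 1) = w powi y / w ^ k / w"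
      using that by (simp add: k power_int_diff)
    ultimately show ?thesis
      using m by (simp add: F_def k)
  qed
  have "q n s y = contour_integral (circlepath 0 (1 / 2)) F / (2 * pi * \<i>)"
    unfolding q_def by (intro arg_cong2[where f = "(/)"] contour_integral_cong) (auto intro!: integrand_eq)
  also have "contour_integral (circlepath 0 (1 / 2)) F = contour_integral (circlepath 0 r) F"
  proof -
    have "F holomorphic_on ball 0 1 - {0}"
      unfolding F_def by (intro holomorphic_intros) auto
    then have "contour_integral (circlepath 0 \<rho>) F = contour_integral (circlepath 0 (min r (1 / 2))) F"
      if "\<rho> \<in> {r, 1 / 2}" for \<rho>
      using that assms by (intro contour_integral_circlepath_eq(3)[of "ball 0 1"]) auto
    then show ?thesis
      by simp
  qed
  finally show ?thesis
    by (simp add: F_def)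
qed

lemma norm_q_le_integral:
  fixes n :: nat and s y :: int and r :: real and g :: "real \<Rightarrow> real"
  assumes "0 \<le> s" "s \<le> int n" "0 < r" "r < 1"
    and "g integrable_on {0..1}"
    and g_ge: "\<And>t. t \<in> {0..1} \<Longrightarrow>
       norm (1 - r * cis (2 * pi * t)) ^ nat (int n - s) * norm (1 + r * cis (2 * pi * t)) ^ nat s \<le> g t"
  shows "norm (q n s y) \<le> r powr (y - s) * integral {0..1} g"
proof -
  define F where "F w = w powi (y - s - 1) * (1 - w) ^ nat (int n - s) * (1 + w) ^ nat s" for w :: complex
  define c where "c t = of_real r * cis (2 * pi * t)" for t
  have "circlepath 0 r t = c t" for t
    by (simp add: circlepath c_def cis_conv_exp mult_ac)
  moreover have "vector_derivative (circlepath 0 r) (at t) = 2 * pi * \<i> * c t" for t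
    by (simp add: vector_derivative_circlepath c_def cis_conv_exp mult_ac)
  ultimately
  have "q n s y = integral {0..1} (\<lambda>t. F (c t) * (2 * pi * \<i> * c t)) / (2 * pi * \<i>)"
    using q_eq_contour_integral_circlepath[OF assms(1-4)] by (simp add: contour_integral_integral F_def)
  then have norm_q: "norm (q n s y) = norm (integral {0..1} (\<lambda>t. F (c t) * (2 * pi * \<i> * c t))) / (2 * pi)"
    by (simp add: norm_divide norm_mult)
  have "norm (F (c t) * (2 * pi * \<i> * c t)) \<le> 2 * pi * r powr (y - s) * g t" if "t \<in> {0..1}" for t
  proof -
    have "r powr (y - s - 1) * r = r powr (y - s)"
      using \<open>0 < r\<close> by (simp add: powr_diff)
    then have "norm (F (c t) * (2 * pi * \<i> * c t)) =
        2 * pi * r powr (y - s) * (norm (1 - c t) ^ nat (int n - s) * norm (1 + c t) ^ nat s)"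
      using \<open>0 < r\<close> powr_real_of_int'[of r "y - s - 1"]
      by (simp add: F_def c_def norm_mult norm_power norm_power_int)
    also have "\<dots> \<le> 2 * pi * r powr (y - s) * g t"
      using g_ge[OF that] by (intro mult_left_mono) (auto simp: c_def)
    finally show ?thesis .
  qed
  moreover have "(\<lambda>t. F (c t) * (2 * pi * \<i> * c t)) integrable_on {0..1}"
    unfolding F_def c_def using \<open>0 < r\<close> by (intro integrable_continuous_real continuous_intros) auto
  ultimately have "norm (integral {0..1} (\<lambda>t. F (c t) * (2 * pi * \<i> * c t))) \<le>
      integral {0..1} (\<lambda>t. 2 * pi * r powr (y - s) * g t)"
    using integrable_on_cmult_left[OF assms(5)] by (intro integral_norm_bound_integral) auto
  then show ?thesis
    unfolding norm_q by (simp add: divide_le_eq mult_ac)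
qed

lemma norm_one_minus_cis_le:
  fixes r \<theta> :: real
  assumes "r \<noteq> 1"
  shows "norm (1 - r * cis \<theta>) \<le> \<bar>1 - r\<bar> * exp (r * (1 - cos \<theta>) / (1 - r)\<^sup>2)"
proof -
  have pos: "0 < (1 - r)\<^sup>2"
    using assms by simp
  have "(norm (1 - r * cis \<theta>))\<^sup>2 = (1 - r * cos \<theta>)\<^sup>2 + (r * sin \<theta>)\<^sup>2"
    by (simp add: cmod_power2 power_mult_distrib)
  also have "\<dots> = (1 - r)\<^sup>2 + 2 * r * (1 - cos \<theta>)"
    using sin_cos_squared_add[of \<theta>] by algebra
  also have "\<dots> = (1 - r)\<^sup>2 * (1 + 2 * r * (1 - cos \<theta>) / (1 - r)\<^sup>2)"
    using pos by (simp add: field_simps)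
  also have "\<dots> \<le> (1 - r)\<^sup>2 * exp (2 * r * (1 - cos \<theta>) / (1 - r)\<^sup>2)"
    using pos by (intro mult_left_mono) (auto simp: add.commute)
  also have "\<dots> = (\<bar>1 - r\<bar> * exp (r * (1 - cos \<theta>) / (1 - r)\<^sup>2))\<^sup>2"
    by (simp add: power_mult_distrib flip: exp_double)
  finally show ?thesis
    by (rule power2_le_imp_le) simp
qed

lemma norm_q_le:
  fixes n :: nat and s y :: int and r K :: real
  defines "K \<equiv> r * (s * (1 - r)\<^sup>2 - (n - s) * (1 + r)\<^sup>2) / (1 - r\<^sup>2)\<^sup>2"
  assumes "0 \<le> s" "s \<le> int n" "0 < r" "r < 1" "0 < K"
  shows "norm (q n s y) \<le> r powr (y - s) * (1 - r) powr (n - s) * (1 + r) powr s * (4 / sqrt K)"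
proof -
  define m k where "m = nat (int n - s)" and "k = nat s"
  have mk: "real m = real n - s" "real k = s"
    using assms(2,3) by (simp_all add: m_def k_def)
  define g where "g t = (1 - r) ^ m * (1 + r) ^ k * exp (- K * (1 - cos (2 * pi * t)))" for t
  have "norm (1 - r * cis \<theta>) ^ m * norm (1 + r * cis \<theta>) ^ k \<le>
      (1 - r) ^ m * (1 + r) ^ k * exp (- K * (1 - cos \<theta>))" for \<theta>
  proof -
    have "norm (1 - r * cis \<theta>) ^ m * norm (1 - (- r) * cis \<theta>) ^ k \<le>
        ((1 - r) * exp (r * (1 - cos \<theta>) / (1 - r)\<^sup>2)) ^ m *
        ((1 + r) * exp (- r * (1 - cos \<theta>) / (1 + r)\<^sup>2)) ^ k"
      using assms(4,5) norm_one_minus_cis_le[of r \<theta>] norm_one_minus_cis_le[of "- r" \<theta>]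
      by (intro mult_mono power_mono) auto
    also have "\<dots> = (1 - r) ^ m * (1 + r) ^ k *
        exp (m * (r * (1 - cos \<theta>) / (1 - r)\<^sup>2) + k * (- r * (1 - cos \<theta>) / (1 + r)\<^sup>2))"
      by (simp only: power_mult_distrib exp_add exp_of_nat_mult mult_ac)
    also have "m * (r * (1 - cos \<theta>) / (1 - r)\<^sup>2) + k * (- r * (1 - cos \<theta>) / (1 + r)\<^sup>2)
        = - K * (1 - cos \<theta>)"
    proof -
      have "(1 - r\<^sup>2)\<^sup>2 = (1 - r)\<^sup>2 * (1 + r)\<^sup>2"
        by (simp add: power2_eq_square algebra_simps)
      then show ?thesis
        using assms(4,5) by (simp add: K_def mk field_simps)
    qed
    finally show ?thesis
      by simp
  qed
  then have "norm (q n s y) \<le> r powr (y - s) * integral {0..1} g"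
    unfolding g_def using assms(2-5)
    by (intro norm_q_le_integral) (auto simp: m_def k_def intro!: integrable_continuous_real continuous_intros)
  also have "integral {0..1} g \<le> (1 - r) ^ m * (1 + r) ^ k * (4 / sqrt K)"
    unfolding g_def integral_mult_right using assms(4,5,6) integral_exp_cos_le[of K]
    by (intro mult_left_mono) auto
  also have "(1 - r) ^ m * (1 + r) ^ k = (1 - r) powr (n - s) * (1 + r) powr s"
    using assms(4,5) powr_realpow[of "1 - r" m] powr_realpow[of "1 + r" k] by (simp add: mk)
  finally show ?thesis
    using assms(4) by (simp add: mult_left_mono mult_ac)
qed

lemma norm_q_le_drift:
  fixes n :: nat and s y :: int and r V :: real
  assumes "0 \<le> s" "s \<le> int n" "0 < r" "r < 1"
    and "0 < V" "V \<le> s * (1 - r)\<^sup>2 - (n - s) * (1 + r)\<^sup>2"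
  shows "norm (q n s y) \<le> r powr (y - s) * (1 - r) powr (n - s) * (1 + r) powr s * (4 / sqrt (r * V))"
proof -
  define K where "K = r * (s * (1 - r)\<^sup>2 - (n - s) * (1 + r)\<^sup>2) / (1 - r\<^sup>2)\<^sup>2"
  have D: "0 < (1 - r\<^sup>2)\<^sup>2" "(1 - r\<^sup>2)\<^sup>2 \<le> 1"
    using assms(3,4) by (auto simp: power_le_one power2_eq_1_iff abs_square_less_1)
  have "r * V \<le> r * (s * (1 - r)\<^sup>2 - (n - s) * (1 + r)\<^sup>2)"
    using assms(3,6) by (intro mult_left_mono) auto
  also have "\<dots> \<le> K"
    unfolding K_def pos_le_divide_eq[OF D(1)] using D(2) assms(3,5,6) by (intro mult_left_le) auto
  finally have "r * V \<le> K" .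
  moreover have "0 < r * V"
    using assms(3,5) by simp
  ultimately have "4 / sqrt K \<le> 4 / sqrt (r * V)"
    by (intro divide_left_mono) auto
  moreover have "norm (q n s y) \<le> r powr (y - s) * (1 - r) powr (n - s) * (1 + r) powr s * (4 / sqrt K)"
    using assms(1-4) \<open>r * V \<le> K\<close> \<open>0 < r * V\<close> unfolding K_def by (intro norm_q_le) auto
  ultimately show ?thesis
    by (elim order_trans) (intro mult_left_mono; simp)
qed

section \<open>The critical radius sqrt 2 - 1\<close>

lemma sqrt2_bounds: "141 / 100 \<le> sqrt (2::real)" "sqrt (2::real) \<le> 142 / 100"
  by (rule real_le_rsqrt real_le_lsqrt; simp add: power2_eq_square)+

lemma saddle_derivative_factor:
  fixes n s \<rho> :: real
  assumes "\<rho> \<noteq> 0" "\<rho> \<noteq> 1" "\<rho> \<noteq> -1"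
  shows "- (s - n / sqrt 2) / \<rho> - (n - s) / (1 - \<rho>) + s / (1 + \<rho>) =
    - (sqrt 2 - 1 - \<rho>) * (n * (2 + sqrt 2) / 4 * (sqrt 2 - 1 - \<rho>)
        + (s - (2 + sqrt 2) / 4 * n) * (\<rho> + 1 + sqrt 2)) / (\<rho> * (1 - \<rho>\<^sup>2))"
proof -
  have "1 - \<rho> \<noteq> 0" "1 + \<rho> \<noteq> 0" "1 - \<rho>\<^sup>2 \<noteq> 0"
    using assms by (auto simp: power2_eq_1_iff)
  moreover have sqrt2_sq: "sqrt 2 * sqrt 2 = (2::real)"
    by simp
  ultimately show ?thesis
    using assms by (simp add: field_simps power2_eq_square) (use sqrt2_sq in algebra)
qed

lemma shrunk_critical_radius_bounds:
  fixes h :: real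
  defines "rc \<equiv> sqrt 2 - 1"
  assumes "0 < h" "h \<le> 1"
  shows "1 / 8 \<le> rc * exp (- h)" "rc * exp (- h) < rc"
    and "h / 5 \<le> rc - rc * exp (- h)" "rc - rc * exp (- h) \<le> h"
proof -
  have rc: "41 / 100 \<le> rc" "rc \<le> 42 / 100"
    using sqrt2_bounds by (auto simp: rc_def)
  have "1 / 3 \<le> exp (- 1 :: real)"
    using exp_le by (simp add: exp_minus field_simps)
  also have "\<dots> \<le> exp (- h)"
    using assms by simp
  finally have "41 / 100 * (1 / 3) \<le> rc * exp (- h)"
    using rc by (intro mult_mono) auto
  then show "1 / 8 \<le> rc * exp (- h)"
    by simp
  show "rc * exp (- h) < rc"
    using rc assms by simp
  have "exp (- h) \<le> 1 / (1 + h)"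
    using exp_ge_add_one_self[of h] assms by (simp add: exp_minus field_simps)
  then have "h / (1 + h) \<le> 1 - exp (- h)"
    using assms by (simp add: field_simps)
  moreover have "h / 2 \<le> h / (1 + h)"
    using assms by (intro divide_left_mono) auto
  ultimately have "h / 2 \<le> 1 - exp (- h)"
    by linarith
  then have "41 / 100 * (h / 2) \<le> rc * (1 - exp (- h))"
    using rc assms by (intro mult_mono) auto
  then show "h / 5 \<le> rc - rc * exp (- h)"
    using \<open>0 < h\<close> by (simp add: algebra_simps)
  show "rc - rc * exp (- h) \<le> h"
    using mult_mono[of rc 1 "1 - exp (- h)" h] exp_ge_add_one_self[of "- h"] rc assms
    by (simp add: algebra_simps)
qed

lemma saddle_excess_mean_value:
  fixes n s r :: real
  defines "rc \<equiv> sqrt 2 - 1"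
  assumes "0 < r" "r < rc"
  obtains z where "r < z" "z < rc"
    and "(s - n / sqrt 2) * (ln rc - ln r) + (n - s) * (ln (1 - r) - ln (1 - rc))
        + s * (ln (1 + r) - ln (1 + rc))
      = (rc - r) * (rc - z) * (n * (2 + sqrt 2) / 4 * (rc - z)
        + (s - (2 + sqrt 2) / 4 * n) * (z + 1 + sqrt 2)) / (z * (1 - z\<^sup>2))"
proof -
  define f where "f \<rho> = (s - n / sqrt 2) * (ln rc - ln \<rho>) + (n - s) * (ln (1 - \<rho>) - ln (1 - rc))
      + s * (ln (1 + \<rho>) - ln (1 + rc))" for \<rho>
  define f' where "f' \<rho> = - (s - n / sqrt 2) / \<rho> - (n - s) / (1 - \<rho>) + s / (1 + \<rho>)" for \<rho>
  have "rc < 1"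
    using sqrt2_bounds by (simp add: rc_def)
  have "(f has_real_derivative f' x) (at x)" if "r \<le> x" "x \<le> rc" for x
  proof -
    have "0 < x" "x < 1"
      using that assms(2,3) \<open>rc < 1\<close> by auto
    then show ?thesis
      unfolding f_def f'_def by - (rule derivative_eq_intros refl | simp add: field_simps)+
  qed
  then obtain z where z: "r < z" "z < rc" and mvt: "f rc - f r = (rc - r) * f' z"
    using MVT2[OF \<open>r < rc\<close>, of f f'] by blast
  have "z \<noteq> 0" "z \<noteq> 1" "z \<noteq> -1"
    using z assms(2) \<open>rc < 1\<close> by auto
  then have f'_z: "f' z = - (rc - z) * (n * (2 + sqrt 2) / 4 * (rc - z)
      + (s - (2 + sqrt 2) / 4 * n) * (z + 1 + sqrt 2)) / (z * (1 - z\<^sup>2))"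
    unfolding f'_def rc_def by (rule saddle_derivative_factor)
  have "f rc = 0"
    by (simp add: f_def)
  then have "f r = - (rc - r) * f' z"
    using mvt by linarith
  also have "\<dots> = (rc - r) * (rc - z) * (n * (2 + sqrt 2) / 4 * (rc - z)
      + (s - (2 + sqrt 2) / 4 * n) * (z + 1 + sqrt 2)) / (z * (1 - z\<^sup>2))"
    unfolding f'_z by (simp add: algebra_simps)
  finally show ?thesis
    using that[OF z] by (simp only: f_def)
qed

lemma saddle_remainder_le:
  fixes n s h r z :: real
  defines "rc \<equiv> sqrt 2 - 1" and "\<epsilon> \<equiv> s - (2 + sqrt 2) / 4 * n"
  assumes "0 \<le> s" "s \<le> n" "1 / 8 \<le> r" "r < z" "z < rc" "rc - r \<le> h"
  shows "(rc - r) * (rc - z) * (n * (2 + sqrt 2) / 4 * (rc - z) + \<epsilon> * (z + 1 + sqrt 2)) / (z * (1 - z\<^sup>2))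
    \<le> 10 * h\<^sup>2 * (n * h + 3 * \<bar>\<epsilon>\<bar>)"
proof -
  define X where "X = n * (2 + sqrt 2) / 4 * (rc - z) + \<epsilon> * (z + 1 + sqrt 2)"
  have rc: "41 / 100 \<le> rc" "rc \<le> 42 / 100"
    using sqrt2_bounds by (auto simp: rc_def)
  have "z\<^sup>2 \<le> (42 / 100)\<^sup>2"
    using assms(5-7) rc by (intro power_mono) auto
  then have "1 / 8 * (82 / 100) \<le> z * (1 - z\<^sup>2)"
    using assms(5,6) by (intro mult_mono) (auto simp: power_divide)
  then have D: "1 / 10 \<le> z * (1 - z\<^sup>2)"
    by simp
  have "(2 + sqrt 2) / 4 * (rc - z) \<le> 1 * h"
    using assms(6-8) sqrt2_bounds by (intro mult_mono) auto
  from mult_left_mono[OF this, of n] have "n * ((2 + sqrt 2) / 4 * (rc - z)) \<le> n * h"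
    using assms(3,4) by simp
  moreover have "0 \<le> n * ((2 + sqrt 2) / 4 * (rc - z))"
    using assms(3,4,7) by simp
  moreover have "0 \<le> z + 1 + sqrt 2" "z + 1 + sqrt 2 \<le> 3"
    using assms(5-7) rc sqrt2_bounds by auto
  then have "\<bar>\<epsilon> * (z + 1 + sqrt 2)\<bar> \<le> \<bar>\<epsilon>\<bar> * 3"
    by (simp add: abs_mult mult_left_mono)
  ultimately have X: "\<bar>X\<bar> \<le> n * h + 3 * \<bar>\<epsilon>\<bar>"
    by (simp add: X_def abs_le_iff)
  have "0 \<le> (rc - r) * (rc - z)" "(rc - r) * (rc - z) \<le> h * h"
    using assms(6-8) by (auto intro: mult_mono)
  then have "(rc - r) * (rc - z) * X \<le> (rc - r) * (rc - z) * \<bar>X\<bar>"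
    by (intro mult_left_mono) auto
  also have "\<dots> \<le> h * h * (n * h + 3 * \<bar>\<epsilon>\<bar>)"
    using \<open>(rc - r) * (rc - z) \<le> h * h\<close> X by (rule mult_mono) auto
  finally have "(rc - r) * (rc - z) * X / (z * (1 - z\<^sup>2)) \<le> h * h * (n * h + 3 * \<bar>\<epsilon>\<bar>) / (1 / 10)"
    using D assms(3,4,6-8) by (intro frac_le) auto
  then show ?thesis
    by (simp add: X_def power2_eq_square)
qed

lemma saddle_excess_le:
  fixes n s h :: real
  defines "rc \<equiv> sqrt 2 - 1"
  assumes "0 \<le> s" "s \<le> n" "0 < h" "h \<le> 1"
  shows "(s - n / sqrt 2) * h + (n - s) * (ln (1 - rc * exp (- h)) - ln (1 - rc))
      + s * (ln (1 + rc * exp (- h)) - ln (1 + rc))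
    \<le> 10 * h\<^sup>2 * (n * h + 3 * \<bar>s - (2 + sqrt 2) / 4 * n\<bar>)"
proof -
  define r where "r = rc * exp (- h)"
  have r: "1 / 8 \<le> r" "r < rc" "rc - r \<le> h"
    using shrunk_critical_radius_bounds[OF assms(4,5)] by (simp_all add: r_def rc_def)
  then have "0 < r"
    by linarith
  then obtain z where z: "r < z" "z < rc" and excess:
    "(s - n / sqrt 2) * (ln rc - ln r) + (n - s) * (ln (1 - r) - ln (1 - rc)) + s * (ln (1 + r) - ln (1 + rc))
      = (rc - r) * (rc - z) * (n * (2 + sqrt 2) / 4 * (rc - z)
        + (s - (2 + sqrt 2) / 4 * n) * (z + 1 + sqrt 2)) / (z * (1 - z\<^sup>2))"
    using \<open>r < rc\<close> unfolding rc_def by (rule saddle_excess_mean_value)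
  moreover have "ln rc - ln r = h"
    using sqrt2_bounds by (simp add: r_def rc_def ln_mult)
  ultimately show ?thesis
    using saddle_remainder_le[OF assms(2,3) r(1) z[unfolded rc_def] r(3)[unfolded rc_def]]
    by (simp add: r_def rc_def)
qed

lemma drift_le:
  fixes n s h :: real
  defines "rc \<equiv> sqrt 2 - 1"
  defines "r \<equiv> rc * exp (- h)"
  assumes "0 \<le> n" "0 < h" "h \<le> 1"
  shows "(n - s) * (1 + r)\<^sup>2 - s * (1 - r)\<^sup>2 \<le> 4 * \<bar>s - (2 + sqrt 2) / 4 * n\<bar> - n * h / 4"
proof -
  define \<epsilon> where "\<epsilon> = s - (2 + sqrt 2) / 4 * n"
  have r: "1 / 8 \<le> r" "r < rc" "h / 5 \<le> rc - r"
    using shrunk_critical_radius_bounds[OF assms(4,5)] by (simp_all add: r_def rc_def)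
  have "4 * ((n - s) * (1 + r)\<^sup>2 - s * (1 - r)\<^sup>2)
      = - 2 * (n * (rc - r)) * (sqrt 2 * (sqrt 2 + 1 - r)) - 8 * (\<epsilon> * (1 + r\<^sup>2))"
    unfolding \<epsilon>_def rc_def by (simp add: power2_eq_square algebra_simps)
  moreover have "n * h \<le> 2 * (n * (rc - r)) * (sqrt 2 * (sqrt 2 + 1 - r))"
  proof -
    have "5 / 2 \<le> sqrt 2 * (sqrt 2 + 1 - r)"
      using sqrt2_bounds r mult_mono[of "141 / 100" "sqrt 2" "141 / 100 + 1 - 42 / 100" "sqrt 2 + 1 - r"]
      by (simp add: rc_def)
    moreover have "n * (h / 5) \<le> n * (rc - r)"
      using r assms(3) by (intro mult_left_mono) auto
    ultimately have "n * (h / 5) * (5 / 2) \<le> n * (rc - r) * (sqrt 2 * (sqrt 2 + 1 - r))"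
      using r assms(3,4) by (intro mult_mono) auto
    then show ?thesis
      by simp
  qed
  moreover have "\<bar>\<epsilon> * (1 + r\<^sup>2)\<bar> \<le> \<bar>\<epsilon>\<bar> * 2"
    using r sqrt2_bounds by (auto simp: abs_mult rc_def power_le_one intro!: mult_left_mono)
  ultimately show ?thesis
    unfolding \<epsilon>_def[symmetric] by (simp add: abs_le_iff)
qed

lemma saddle_weight_le:
  fixes n s y E h :: real
  defines "rc \<equiv> sqrt 2 - 1"
  defines "r \<equiv> rc * exp (- h)"
  assumes "0 \<le> s" "s \<le> n" "0 < h" "h \<le> 1" "- 1 \<le> y + n - 2 * s - E"
  shows "2 powr (- n / 2) * (sqrt 2 + 1) powr E * r powr (y - s) * (1 - r) powr (n - s) * (1 + r) powr s
    \<le> 3 * exp (10 * h\<^sup>2 * (n * h + 3 * \<bar>s - (2 + sqrt 2) / 4 * n\<bar>) - (y - n / sqrt 2) * h)"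
proof -
  define l1 l2 where "l1 = ln (1 - r) - ln (1 - rc)" and "l2 = ln (1 + r) - ln (1 + rc)"
  have rc: "0 < rc" "rc < 1"
    using sqrt2_bounds by (auto simp: rc_def)
  have r: "0 < r" "r < 1"
    using shrunk_critical_radius_bounds[OF assms(5,6)] rc by (simp_all add: r_def rc_def)
  have "0 < sqrt 2 + (1::real)"
    by (simp add: add_pos_pos)
  have "ln (sqrt 2 + 1) + ln rc = ln ((sqrt 2 + 1) * rc)"
    using rc \<open>0 < sqrt 2 + 1\<close> by (simp add: ln_mult)
  also have "(sqrt 2 + 1) * rc = 1"
    by (simp add: rc_def algebra_simps)
  finally have ln_sqrt2_plus1: "ln (sqrt 2 + 1) = - ln rc"
    by simp
  have "1 - rc = sqrt 2 * rc" "1 + rc = sqrt 2"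
    by (simp_all add: rc_def algebra_simps)
  then have logs: "ln (1 - r) = l1 + ln 2 / 2 + ln rc" "ln (1 + r) = l2 + ln 2 / 2" "ln r = ln rc - h"
    using rc by (simp_all add: l1_def l2_def r_def ln_mult ln_sqrt)
  have "2 powr (- n / 2) * (sqrt 2 + 1) powr E * r powr (y - s) * (1 - r) powr (n - s) * (1 + r) powr s
      = exp (- n / 2 * ln 2 + E * ln (sqrt 2 + 1) + (y - s) * ln r + (n - s) * ln (1 - r) + s * ln (1 + r))"
    using r \<open>0 < sqrt 2 + 1\<close> unfolding exp_add by (simp add: powr_def)
  also have "\<dots> = exp (ln rc * (y + n - 2 * s - E)
      + ((s - n / sqrt 2) * h + (n - s) * l1 + s * l2) - (y - n / sqrt 2) * h)"
    unfolding ln_sqrt2_plus1 logs by (simp add: field_simps)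
  also have "\<dots> \<le> exp (ln 3 + 10 * h\<^sup>2 * (n * h + 3 * \<bar>s - (2 + sqrt 2) / 4 * n\<bar>) - (y - n / sqrt 2) * h)"
  proof -
    have "ln rc * (y + n - 2 * s - E) \<le> ln rc * (- 1)"
      using rc assms(7) by (intro mult_left_mono_neg) auto
    also have "\<dots> \<le> ln 3"
      using sqrt2_bounds \<open>0 < sqrt 2 + 1\<close> by (simp flip: ln_sqrt2_plus1)
    finally show ?thesis
      using saddle_excess_le[OF assms(3-6)] by (simp add: l1_def l2_def r_def rc_def)
  qed
  also have "\<dots> = 3 * exp (10 * h\<^sup>2 * (n * h + 3 * \<bar>s - (2 + sqrt 2) / 4 * n\<bar>) - (y - n / sqrt 2) * h)"
    by (simp add: exp_add exp_diff)
  finally show ?thesis .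
qed

section \<open>The scaling of Q\<close>

lemma cube_root_powers:
  fixes n :: nat
  shows "real n powr (2 / 3) = (real n powr (1 / 3))\<^sup>2" "(real n powr (1 / 3)) ^ 3 = real n"
  by (simp_all add: powr_powr flip: powr_realpow')

lemma floor_half_b_near_center:
  "\<bar>real_of_int \<lfloor>b n L / 2\<rfloor> - (2 + sqrt 2) / 4 * n\<bar> \<le> \<bar>L\<bar> * n powr (2 / 3) + 1"
proof -
  define D where "D = 2 powr (- 1 / 6) / 2 * (L * n powr (2 / 3))"
  have "b n L / 2 = (2 + sqrt 2) / 4 * n + D"
    by (simp add: D_def b_def field_simps real_div_sqrt)
  moreover have "\<bar>D\<bar> = 2 powr (- 1 / 6) / 2 * (\<bar>L\<bar> * n powr (2 / 3))"
    by (simp add: D_def abs_mult)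
  moreover have "\<dots> \<le> 1 * (\<bar>L\<bar> * n powr (2 / 3))"
    using powr_mono[of "- 1 / 6" 0 "2 :: real"] by (intro mult_right_mono) simp_all
  moreover have "real_of_int \<lfloor>b n L / 2\<rfloor> \<le> b n L / 2" "b n L / 2 < real_of_int \<lfloor>b n L / 2\<rfloor> + 1"
    by linarith+
  ultimately show ?thesis
    by linarith
qed

lemma scaled_index_bounds:
  fixes n :: nat and L x \<xi> E :: real and y :: int
  defines "y \<equiv> uidx n \<xi> + iidx n x"
    and "E \<equiv> iidx n x + 2 powr (- 5 / 6) * \<xi> * n powr (1 / 3) - 2 powr (- 1 / 6) * L * n powr (2 / 3)"
  shows "2 powr (- 5 / 6) * n powr (1 / 3) * (x + \<xi>) - 2 \<le> y - n / sqrt 2"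
    and "- 1 \<le> y + n - 2 * \<lfloor>b n L / 2\<rfloor> - E"
proof -
  have "2 powr (- 5 / 6) * x * n powr (1 / 3) - 1 < iidx n x"
    "n / sqrt 2 + 2 powr (- 5 / 6) * \<xi> * n powr (1 / 3) - 1 < uidx n \<xi>"
    unfolding iidx_def uidx_def by linarith+
  moreover have "2 * real_of_int \<lfloor>b n L / 2\<rfloor> \<le> n + n / sqrt 2 + 2 powr (- 1 / 6) * L * n powr (2 / 3)"
  proof -
    have "b n L = n + n / sqrt 2 + 2 powr (- 1 / 6) * L * n powr (2 / 3)"
      by (simp add: b_def distrib_left)
    then show ?thesis
      using of_int_floor_le[of "b n L / 2"] by linarith
  qed
  ultimately show "2 powr (- 5 / 6) * n powr (1 / 3) * (x + \<xi>) - 2 \<le> y - n / sqrt 2"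
    and "- 1 \<le> y + n - 2 * \<lfloor>b n L / 2\<rfloor> - E"
    by (simp_all add: y_def E_def algebra_simps)
qed

lemma floor_half_b_bounds:
  fixes n :: nat and L :: real
  assumes "20 * (\<bar>L\<bar> + 1) \<le> n powr (1 / 3)"
  shows "\<bar>real_of_int \<lfloor>b n L / 2\<rfloor> - (2 + sqrt 2) / 4 * n\<bar> \<le> (\<bar>L\<bar> + 1) * n powr (2 / 3)"
    and "0 \<le> \<lfloor>b n L / 2\<rfloor>" "\<lfloor>b n L / 2\<rfloor> \<le> int n"
proof -
  define \<nu> where "\<nu> = real n powr (1 / 3)"
  have "1 \<le> \<nu>\<^sup>2"
    using assms by (simp add: \<nu>_def one_le_power)
  then show dev: "\<bar>real_of_int \<lfloor>b n L / 2\<rfloor> - (2 + sqrt 2) / 4 * n\<bar> \<le> (\<bar>L\<bar> + 1) * n powr (2 / 3)"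
    using floor_half_b_near_center[of n L] by (simp add: \<nu>_def cube_root_powers(1) algebra_simps)
  have "20 * ((\<bar>L\<bar> + 1) * n powr (2 / 3)) = 20 * (\<bar>L\<bar> + 1) * \<nu>\<^sup>2"
    by (simp add: \<nu>_def cube_root_powers(1))
  also have "\<dots> \<le> \<nu> * \<nu>\<^sup>2"
    using assms by (intro mult_right_mono) (auto simp: \<nu>_def)
  also have "\<dots> = \<nu> ^ 3"
    by (simp add: power2_eq_square power3_eq_cube)
  also have "\<dots> = n"
    by (simp add: \<nu>_def cube_root_powers(2))
  finally have "20 * ((\<bar>L\<bar> + 1) * n powr (2 / 3)) \<le> n" .
  moreover have "85 / 100 * n \<le> (2 + sqrt 2) / 4 * n" "(2 + sqrt 2) / 4 * n \<le> 86 / 100 * n"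
    using sqrt2_bounds by (intro mult_right_mono; simp)+
  ultimately have "0 \<le> real_of_int \<lfloor>b n L / 2\<rfloor>" "real_of_int \<lfloor>b n L / 2\<rfloor> \<le> real n"
    using dev unfolding abs_le_iff by linarith+
  then show "0 \<le> \<lfloor>b n L / 2\<rfloor>" "\<lfloor>b n L / 2\<rfloor> \<le> int n"
    by (simp, metis of_int_le_iff of_int_of_nat_eq)
qed

lemma floor_half_b_drift_ge:
  fixes n :: nat and L \<kappa> \<nu> r :: real and s :: int
  defines "\<nu> \<equiv> real n powr (1 / 3)" and "s \<equiv> \<lfloor>b n L / 2\<rfloor>"
  defines "r \<equiv> (sqrt 2 - 1) * exp (- (\<kappa> / \<nu>))"
  assumes "20 * (\<bar>L\<bar> + 1) \<le> \<kappa>" "\<kappa> \<le> \<nu>"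
  shows "\<nu>\<^sup>2 \<le> s * (1 - r)\<^sup>2 - (n - s) * (1 + r)\<^sup>2"
proof -
  define P where "P = (\<bar>L\<bar> + 1) * \<nu>\<^sup>2"
  define \<epsilon> where "\<epsilon> = s - (2 + sqrt 2) / 4 * n"
  have "20 \<le> \<nu>" "0 < \<kappa> / \<nu>" "\<kappa> / \<nu> \<le> 1"
    using assms(4,5) by (auto simp: divide_le_eq)
  have "20 * (\<bar>L\<bar> + 1) \<le> real n powr (1 / 3)"
    using assms(4,5) by (simp add: \<nu>_def)
  from floor_half_b_bounds(1)[OF this, folded s_def, unfolded cube_root_powers(1), folded \<nu>_def]
  have "\<bar>\<epsilon>\<bar> \<le> P"
    by (simp add: \<epsilon>_def P_def)
  have "real n = \<nu> ^ 3"
    by (simp add: \<nu>_def cube_root_powers(2))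
  then have "real n * (\<kappa> / \<nu>) = \<kappa> * \<nu>\<^sup>2"
    using \<open>20 \<le> \<nu>\<close> by (simp add: power2_eq_square power3_eq_cube)
  then have "(n - s) * (1 + r)\<^sup>2 - s * (1 - r)\<^sup>2 \<le> 4 * \<bar>\<epsilon>\<bar> - \<kappa> * \<nu>\<^sup>2 / 4"
    using drift_le[of n "\<kappa> / \<nu>" s] \<open>0 < \<kappa> / \<nu>\<close> \<open>\<kappa> / \<nu> \<le> 1\<close> by (simp add: r_def \<epsilon>_def)
  moreover have "20 * P \<le> \<kappa> * \<nu>\<^sup>2"
    unfolding P_def using mult_right_mono[OF assms(4) zero_le_power2] by (simp only: mult.assoc)
  moreover have "\<nu>\<^sup>2 \<le> P"
    using mult_right_mono[of 1 "\<bar>L\<bar> + 1" "\<nu>\<^sup>2"] by (simp add: P_def)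
  ultimately show ?thesis
    using \<open>\<bar>\<epsilon>\<bar> \<le> P\<close> by linarith
qed

lemma norm_q_floor_half_b_le:
  fixes n :: nat and L \<kappa> \<nu> r :: real and s y :: int
  defines "\<nu> \<equiv> real n powr (1 / 3)" and "s \<equiv> \<lfloor>b n L / 2\<rfloor>"
  defines "r \<equiv> (sqrt 2 - 1) * exp (- (\<kappa> / \<nu>))"
  assumes "20 * (\<bar>L\<bar> + 1) \<le> \<kappa>" "\<kappa> \<le> \<nu>"
  shows "norm (q n s y) \<le> r powr (y - s) * (1 - r) powr (n - s) * (1 + r) powr s * (12 / \<nu>)"
proof -
  have "20 \<le> \<nu>" "0 < \<kappa> / \<nu>" "\<kappa> / \<nu> \<le> 1"
    using assms(4,5) by (auto simp: divide_le_eq)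
  have r: "1 / 8 \<le> r" "r < sqrt 2 - 1"
    using shrunk_critical_radius_bounds[OF \<open>0 < \<kappa> / \<nu>\<close> \<open>\<kappa> / \<nu> \<le> 1\<close>] by (simp_all add: r_def)
  have "20 * (\<bar>L\<bar> + 1) \<le> real n powr (1 / 3)"
    using assms(4,5) by (simp add: \<nu>_def)
  note s = floor_half_b_bounds(2,3)[OF this, folded s_def]
  have "(\<nu> / 3)\<^sup>2 \<le> r * \<nu>\<^sup>2"
    using r mult_right_mono[of "1 / 9" r "\<nu>\<^sup>2"] by (simp add: power_divide)
  then have "\<nu> / 3 \<le> sqrt (r * \<nu>\<^sup>2)"
    by (rule real_le_rsqrt)
  then have "4 / sqrt (r * \<nu>\<^sup>2) \<le> 4 / (\<nu> / 3)"
    using \<open>20 \<le> \<nu>\<close> r by (intro divide_left_mono) (auto intro!: mult_pos_pos)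
  moreover have "norm (q n s y) \<le> r powr (y - s) * (1 - r) powr (n - s) * (1 + r) powr s * (4 / sqrt (r * \<nu>\<^sup>2))"
    using s r sqrt2_bounds \<open>20 \<le> \<nu>\<close>
      floor_half_b_drift_ge[OF assms(4,5)[unfolded \<nu>_def], folded \<nu>_def, folded s_def r_def]
    by (intro norm_q_le_drift) auto
  ultimately show ?thesis
    by (elim order_trans) (intro mult_left_mono; simp)
qed

lemma rescaled_exponent_le:
  fixes n h \<nu> \<kappa> \<epsilon> P Y c t :: real
  assumes "h * \<nu> = \<kappa>" "n = \<nu> ^ 3" "0 < h" "h \<le> 1"
    and "\<bar>\<epsilon>\<bar> \<le> P * \<nu>\<^sup>2" "c * \<nu> * t - 2 \<le> Y"
  shows "10 * h\<^sup>2 * (n * h + 3 * \<bar>\<epsilon>\<bar>) - Y * h \<le> 2 + 10 * (\<kappa> ^ 3 + 3 * \<kappa>\<^sup>2 * P) - c * \<kappa> * t"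
proof -
  have cube: "h\<^sup>2 * (n * h) = \<kappa> ^ 3"
    using assms(1,2) by (simp add: power3_eq_cube power2_eq_square mult_ac)
  have "h\<^sup>2 * \<bar>\<epsilon>\<bar> \<le> h\<^sup>2 * (P * \<nu>\<^sup>2)"
    using assms(5) by (intro mult_left_mono) auto
  also have "\<dots> = \<kappa>\<^sup>2 * P"
    by (simp add: power_mult_distrib mult_ac flip: assms(1))
  finally have offset: "h\<^sup>2 * \<bar>\<epsilon>\<bar> \<le> \<kappa>\<^sup>2 * P" .
  have "(c * \<nu> * t - 2) * h \<le> Y * h"
    using assms(3,6) by (intro mult_right_mono) auto
  then have "c * \<kappa> * t - 2 * h \<le> Y * h"
    unfolding assms(1)[symmetric] by (simp add: algebra_simps)
  with assms(4) have shift: "c * \<kappa> * t - 2 \<le> Y * h"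
    by linarith
  from cube offset shift show ?thesis
    by (simp add: algebra_simps)
qed

lemma norm_Q_le_saddle_weight:
  fixes n :: nat and L \<kappa> x \<xi> \<nu> r E :: real and s y :: int
  defines "\<nu> \<equiv> real n powr (1 / 3)" and "r \<equiv> (sqrt 2 - 1) * exp (- (\<kappa> / \<nu>))"
    and "s \<equiv> \<lfloor>b n L / 2\<rfloor>" and "y \<equiv> uidx n \<xi> + iidx n x"
    and "E \<equiv> iidx n x + 2 powr (- 5 / 6) * \<xi> * \<nu> - 2 powr (- 1 / 6) * L * \<nu>\<^sup>2"
  assumes "20 * (\<bar>L\<bar> + 1) \<le> \<kappa>" "\<kappa> \<le> \<nu>"
  shows "norm (Q n L x \<xi>)
    \<le> 12 * (2 powr (- n / 2) * (sqrt 2 + 1) powr E * r powr (y - s) * (1 - r) powr (n - s) * (1 + r) powr s)"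
proof -
  have "0 < \<nu>"
    using assms(6,7) by auto
  have "norm (Q n L x \<xi>) = 2 powr (- 5 / 6) * \<nu> * (2 powr (- n / 2) * (sqrt 2 + 1) powr E) * norm (q n s y)"
    by (simp add: Q_def E_def \<nu>_def s_def y_def cube_root_powers(1) norm_mult)
  also have "\<dots> \<le> 2 powr (- 5 / 6) * \<nu> * (2 powr (- n / 2) * (sqrt 2 + 1) powr E)
      * (r powr (y - s) * (1 - r) powr (n - s) * (1 + r) powr s * (12 / \<nu>))"
    using norm_q_floor_half_b_le[OF assms(6) assms(7)[unfolded \<nu>_def], of y, folded \<nu>_def, folded r_def s_def]
      \<open>0 < \<nu>\<close>
    by (intro mult_left_mono) auto
  also have "\<dots> = 12 * 2 powr (- 5 / 6) * (2 powr (- n / 2) * (sqrt 2 + 1) powr E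
      * r powr (y - s) * (1 - r) powr (n - s) * (1 + r) powr s)"
    using \<open>0 < \<nu>\<close> by (simp add: field_simps)
  also have "\<dots> \<le> 12 * (2 powr (- n / 2) * (sqrt 2 + 1) powr E
      * r powr (y - s) * (1 - r) powr (n - s) * (1 + r) powr s)"
    using powr_mono[of "- 5 / 6" 0 "2 :: real"] by (intro mult_right_mono) auto
  finally show ?thesis .
qed

lemma norm_Q_le:
  fixes n :: nat and L \<kappa> x \<xi> :: real
  assumes "20 * (\<bar>L\<bar> + 1) \<le> \<kappa>" "\<kappa> \<le> n powr (1 / 3)"
  shows "norm (Q n L x \<xi>)
    \<le> 36 * exp (2 + 10 * (\<kappa> ^ 3 + 3 * \<kappa>\<^sup>2 * (\<bar>L\<bar> + 1))) * exp (- (2 powr (- 5 / 6) * \<kappa>) * (x + \<xi>))"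
proof -
  define \<nu> h where "\<nu> = real n powr (1 / 3)" and "h = \<kappa> / \<nu>"
  define s y where "s = \<lfloor>b n L / 2\<rfloor>" and "y = uidx n \<xi> + iidx n x"
  define E where "E = iidx n x + 2 powr (- 5 / 6) * \<xi> * \<nu> - 2 powr (- 1 / 6) * L * \<nu>\<^sup>2"
  have "20 \<le> \<kappa>" "\<kappa> \<le> \<nu>"
    using assms by (auto simp: \<nu>_def)
  then have "0 < h" "h \<le> 1" "h * \<nu> = \<kappa>"
    by (auto simp: h_def divide_le_eq)
  have "20 * (\<bar>L\<bar> + 1) \<le> real n powr (1 / 3)"
    using assms by simp
  note s = floor_half_b_bounds[OF this, folded s_def, unfolded cube_root_powers(1), folded \<nu>_def]
  have index: "2 powr (- 5 / 6) * \<nu> * (x + \<xi>) - 2 \<le> y - n / sqrt 2" "- 1 \<le> y + n - 2 * s - E"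
    unfolding y_def E_def s_def \<nu>_def cube_root_powers(1)[symmetric] by (rule scaled_index_bounds)+
  have "real n = \<nu> ^ 3"
    by (simp add: \<nu>_def cube_root_powers(2))
  from rescaled_exponent_le[OF \<open>h * \<nu> = \<kappa>\<close> this \<open>0 < h\<close> \<open>h \<le> 1\<close> s(1) index(1)]
  have exponent: "exp (10 * h\<^sup>2 * (n * h + 3 * \<bar>s - (2 + sqrt 2) / 4 * n\<bar>) - (y - n / sqrt 2) * h)
      \<le> exp (2 + 10 * (\<kappa> ^ 3 + 3 * \<kappa>\<^sup>2 * (\<bar>L\<bar> + 1)) - 2 powr (- 5 / 6) * \<kappa> * (x + \<xi>))"
    by (rule exp_mono)
  have "norm (Q n L x \<xi>) \<le> 12 * (2 powr (- n / 2) * (sqrt 2 + 1) powr E * ((sqrt 2 - 1) * exp (- h)) powr (y - s)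
      * (1 - (sqrt 2 - 1) * exp (- h)) powr (n - s) * (1 + (sqrt 2 - 1) * exp (- h)) powr s)"
    using norm_Q_le_saddle_weight[OF assms(1) \<open>\<kappa> \<le> \<nu>\<close>[unfolded \<nu>_def], of x \<xi>]
    by (simp add: \<nu>_def h_def s_def y_def E_def)
  also have "\<dots> \<le> 12 * (3 * exp (10 * h\<^sup>2 * (n * h + 3 * \<bar>s - (2 + sqrt 2) / 4 * n\<bar>) - (y - n / sqrt 2) * h))"
    using saddle_weight_le[of s n h y E] s(2,3) index(2) \<open>0 < h\<close> \<open>h \<le> 1\<close>
    by (intro mult_left_mono) simp_all
  also have "\<dots> \<le> 36 * exp (2 + 10 * (\<kappa> ^ 3 + 3 * \<kappa>\<^sup>2 * (\<bar>L\<bar> + 1)) - 2 powr (- 5 / 6) * \<kappa> * (x + \<xi>))"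
    using exponent by linarith
  also have "\<dots> = 36 * exp (2 + 10 * (\<kappa> ^ 3 + 3 * \<kappa>\<^sup>2 * (\<bar>L\<bar> + 1))) * exp (- (2 powr (- 5 / 6) * \<kappa>) * (x + \<xi>))"
    by (simp add: mult.assoc flip: exp_add)
  finally show ?thesis .
qed

theorem proposition5p4:
  fixes L :: real
  shows "\<exists>c>0. \<exists>C::real. \<forall>\<^sub>F n in sequentially.
           \<forall>x\<ge>0. \<forall>\<xi>::real. norm (Q n L x \<xi>) \<le> C * exp (- c * (x + \<xi>))"
proof (intro exI conjI)
  define \<kappa> where "\<kappa> = 20 * (\<bar>L\<bar> + 1)"
  show "0 < 2 powr (- 5 / 6) * \<kappa>"
    by (simp add: \<kappa>_def add_nonneg_pos)
  have "filterlim (\<lambda>n. real n powr (1 / 3)) at_top sequentially"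
    by real_asymp
  then have "\<forall>\<^sub>F n in sequentially. \<kappa> \<le> real n powr (1 / 3)"
    by (simp add: filterlim_at_top)
  moreover have "20 * (\<bar>L\<bar> + 1) \<le> \<kappa>"
    by (simp add: \<kappa>_def)
  \<comment> \<open>the bound holds for every x\<close>
  ultimately show "\<forall>\<^sub>F n in sequentially. \<forall>x\<ge>0. \<forall>\<xi>. norm (Q n L x \<xi>)
      \<le> 36 * exp (2 + 10 * (\<kappa> ^ 3 + 3 * \<kappa>\<^sup>2 * (\<bar>L\<bar> + 1))) * exp (- (2 powr (- 5 / 6) * \<kappa>) * (x + \<xi>))"
    by (elim eventually_mono) (blast intro: norm_Q_le)
qed

end
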